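(* Let $r>0$ be a fixed integer. There exist a constant $c>0$ and infinitely many $n$ such that, for each such $n$, there is a hypergraph $H$ on $n$ vertices which is both $r$-cross-free and $r$-closed, and such that every sub-hypergraph $H'\subseteq H$ with $\mathrm{cl}_r(H')=H$ has at least $c\, n^r$ hyperedges (i.e. $\Omega(n^r)$ hyperedges).
   Context: Hypergraphs have vertex set $V=[n]$ and are identified with their sets of hyperedges; a sub-hypergraph is a subset of the hyperedge set; $\overline A = V\setminus A$. $\mathcal K_r(n)$ is the class of hypergraphs $\mathcal E$ on $V$ satisfying: (R0) every $X\subseteq V$ with $|X|\le r$ is in $\mathcal E$; (R1) $A\in\mathcal E\Rightarrow V\setminus A\in\mathcal E$; (R2) $A,B\in\mathcal E$ and $|A\cap B|\ge r\Rightarrow A\cup B\in\mathcal E$. $\mathcal K^0_r(n)$ is the class satisfying (R0) and (R1) only. $\mathrm{cl}_r(H)$ (resp. $\mathrm{cl}^0_r(H)$) is the intersection of all hypergraphs in $\mathcal K_r(n)$ (resp. $\mathcal K^0_r(n)$) containing $H$. $H$ is $r$-closed if $\mathrm{cl}_r(H)=H$. Sets $A,B\subseteq V$ are $r$-orthogonal if $\mathrm{cl}_r(\{A,B\})=\mathrm{cl}^0_r(\{A,B\})$. A hypergraph is $r$-cross-free if every pair of its hyperedges is $r$-orthogonal. *)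

theory Defs
  imports Complex_Main
begin

definition vset :: "nat \<Rightarrow> nat set" where
  "vset n = {1..n}"

definition K_class :: "nat \<Rightarrow> nat \<Rightarrow> nat set set set" where
  "K_class r n = {E. E \<subseteq> Pow (vset n)
     \<and> (\<forall>X. X \<subseteq> vset n \<and> card X \<le> r \<longrightarrow> X \<in> E)
     \<and> (\<forall>A\<in>E. vset n - A \<in> E)
     \<and> (\<forall>A\<in>E. \<forall>B\<in>E. card (A \<inter> B) \<ge> r \<longrightarrow> A \<union> B \<in> E)}"

definition K0_class :: "nat \<Rightarrow> nat \<Rightarrow> nat set set set" where
  "K0_class r n = {E. E \<subseteq> Pow (vset n)
     \<and> (\<forall>X. X \<subseteq> vset n \<and> card X \<le> r \<longrightarrow> X \<in> E)
     \<and> (\<forall>A\<in>E. vset n - A \<in> E)}"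

definition cl :: "nat \<Rightarrow> nat \<Rightarrow> nat set set \<Rightarrow> nat set set" where
  "cl r n H = \<Inter> {E \<in> K_class r n. H \<subseteq> E}"

definition cl0 :: "nat \<Rightarrow> nat \<Rightarrow> nat set set \<Rightarrow> nat set set" where
  "cl0 r n H = \<Inter> {E \<in> K0_class r n. H \<subseteq> E}"

definition r_closed :: "nat \<Rightarrow> nat \<Rightarrow> nat set set \<Rightarrow> bool" where
  "r_closed r n H \<longleftrightarrow> cl r n H = H"

definition r_orthogonal :: "nat \<Rightarrow> nat \<Rightarrow> nat set \<Rightarrow> nat set \<Rightarrow> bool" where
  "r_orthogonal r n A B \<longleftrightarrow> cl r n {A, B} = cl0 r n {A, B}"

definition r_cross_free :: "nat \<Rightarrow> nat \<Rightarrow> nat set set \<Rightarrow> bool" where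
  "r_cross_free r n H \<longleftrightarrow> (\<forall>A\<in>H. \<forall>B\<in>H. r_orthogonal r n A B)"

end

theory Submission
  imports Defs "HOL-Library.FuncSet" "HOL-Library.Infinite_Set" "HOL-Number_Theory.Cong"
begin

(* Let P be a family of (r+1)-subsets of V any two of which meet in fewer than r points, and let
   H consist of the trivial sets (size or co-size at most r), the members of P and their
   complements. H is r-closed, and every subfamily G of H containing A or V - A for each A in P
   satisfies cl_r(G) = cl^0_r(G) = H; taking G = {A, B} with the relevant part of P shows that H
   is r-cross-free. Conversely a generating subfamily of H must contain A or V - A for each A in P,
   since otherwise it lies in the r-closed family built from P - {A}. Hence generators have at
   least |P|/2 members. A parity-check code on r+1 blocks of m vertices gives such a P with m^r
   members on n = (r+1)m vertices. *)

definition trivial_edges :: "nat \<Rightarrow> nat \<Rightarrow> nat set set" where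
  "trivial_edges r n = {X. X \<subseteq> vset n \<and> (card X \<le> r \<or> card (vset n - X) \<le> r)}"

definition packing_hypergraph :: "nat \<Rightarrow> nat \<Rightarrow> nat set set \<Rightarrow> nat set set" where
  "packing_hypergraph r n P = trivial_edges r n \<union> P \<union> (\<lambda>A. vset n - A) ` P"

definition r_packing :: "nat \<Rightarrow> nat \<Rightarrow> nat set set \<Rightarrow> bool" where
  "r_packing r n P \<longleftrightarrow> P \<subseteq> Pow (vset n) \<and> (\<forall>A\<in>P. card A = Suc r) \<and>
     (\<forall>A\<in>P. \<forall>B\<in>P. A \<noteq> B \<longrightarrow> card (A \<inter> B) < r)"

lemma finite_vset [simp]: "finite (vset n)"
  by (simp add: vset_def)

lemma card_vset_Diff: "A \<subseteq> vset n \<Longrightarrow> card (vset n - A) = n - card A"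
  by (simp add: card_Diff_subset finite_subset vset_def)

lemma r_packing_subset: "r_packing r n P \<Longrightarrow> Q \<subseteq> P \<Longrightarrow> r_packing r n Q"
  unfolding r_packing_def by blast

lemma packing_hypergraph_subset_Pow:
  "r_packing r n P \<Longrightarrow> packing_hypergraph r n P \<subseteq> Pow (vset n)"
  unfolding packing_hypergraph_def trivial_edges_def r_packing_def by auto

lemma K_class_subset_K0_class: "K_class r n \<subseteq> K0_class r n"
  unfolding K_class_def K0_class_def by auto

lemma cl_least: "E \<in> K_class r n \<Longrightarrow> G \<subseteq> E \<Longrightarrow> cl r n G \<subseteq> E"
  unfolding cl_def by blast

lemma cl_eq_cl0_eqI:
  assumes "F \<in> K_class r n" "G \<subseteq> F" "\<And>E. E \<in> K0_class r n \<Longrightarrow> G \<subseteq> E \<Longrightarrow> F \<subseteq> E"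
  shows "cl r n G = F" "cl0 r n G = F"
  using assms K_class_subset_K0_class unfolding cl_def cl0_def by blast+

subsection \<open>The hypergraph generated by a packing\<close>

lemma trivial_edges_subset_K0_class:
  assumes "E \<in> K0_class r n"
  shows "trivial_edges r n \<subseteq> E"
proof
  fix X assume X: "X \<in> trivial_edges r n"
  have R0: "\<And>Y. Y \<subseteq> vset n \<Longrightarrow> card Y \<le> r \<Longrightarrow> Y \<in> E"
    and R1: "\<And>A. A \<in> E \<Longrightarrow> vset n - A \<in> E"
    using assms unfolding K0_class_def by auto
  show "X \<in> E"
  proof (cases "card X \<le> r")
    case True
    then show ?thesis using X R0 unfolding trivial_edges_def by blast
  next
    case False
    then have "vset n - X \<in> E" using X R0 unfolding trivial_edges_def by blast
    moreover have "vset n - (vset n - X) = X" using X unfolding trivial_edges_def by blast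
    ultimately show ?thesis using R1 by metis
  qed
qed

lemma packing_hypergraph_subset_K0_class:
  assumes E: "E \<in> K0_class r n" and P: "P \<subseteq> Pow (vset n)"
    and meets: "\<forall>A\<in>P. A \<in> E \<or> vset n - A \<in> E"
  shows "packing_hypergraph r n P \<subseteq> E"
proof -
  have R1: "\<And>A. A \<in> E \<Longrightarrow> vset n - A \<in> E"
    using E unfolding K0_class_def by auto
  have "A \<in> E \<and> vset n - A \<in> E" if "A \<in> P" for A
  proof -
    have "vset n - (vset n - A) = A" using that P by blast
    then show ?thesis using meets that R1 by metis
  qed
  then show ?thesis
    using trivial_edges_subset_K0_class[OF E] unfolding packing_hypergraph_def by blast
qed

lemma trivial_edge_union:
  assumes X: "X \<in> trivial_edges r n" and Y: "Y \<subseteq> vset n" and XY: "r \<le> card (X \<inter> Y)"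
  shows "X \<union> Y = Y \<or> X \<union> Y \<in> trivial_edges r n"
proof (cases "card X \<le> r")
  case True
  have "finite X" using X unfolding trivial_edges_def by (blast intro: finite_subset finite_vset)
  moreover have "card X \<le> card (X \<inter> Y)" using True XY by linarith
  ultimately have "X \<inter> Y = X" by (intro card_seteq) auto
  then show ?thesis by blast
next
  case False
  have "card (vset n - (X \<union> Y)) \<le> card (vset n - X)" by (rule card_mono) auto
  then have "card (vset n - (X \<union> Y)) \<le> r" using X False unfolding trivial_edges_def by auto
  then show ?thesis using X Y unfolding trivial_edges_def by auto
qed

lemma packing_union_complement:
  assumes P: "r_packing r n P" and A: "A \<in> P" and B: "B \<in> P"
  shows "A \<union> (vset n - B) \<in> packing_hypergraph r n P"
proof -
  have V: "A \<subseteq> vset n" "B \<subseteq> vset n" and cardB: "card B = Suc r"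
    using A B P unfolding r_packing_def by auto
  show ?thesis
  proof (cases "A \<inter> B = {}")
    case True
    then have "A \<union> (vset n - B) = vset n - B" using V by blast
    then show ?thesis using B unfolding packing_hypergraph_def by auto
  next
    case False
    have "card (B - A) < card B"
      using False V finite_subset[OF V(2)] by (intro psubset_card_mono) auto
    moreover have "vset n - (A \<union> (vset n - B)) = B - A" using V by blast
    ultimately show ?thesis
      using V cardB unfolding packing_hypergraph_def trivial_edges_def by auto
  qed
qed

lemma packing_complement_union:
  assumes P: "r_packing r n P" and A: "A \<in> P" and B: "B \<in> P"
  shows "(vset n - A) \<union> (vset n - B) \<in> packing_hypergraph r n P"
proof (cases "A = B")
  case True
  then show ?thesis using A unfolding packing_hypergraph_def by auto
next
  case False
  have "A \<subseteq> vset n" using A P unfolding r_packing_def by auto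
  then have "vset n - ((vset n - A) \<union> (vset n - B)) = A \<inter> B" by blast
  moreover have "card (A \<inter> B) < r" using A B P False unfolding r_packing_def by blast
  ultimately show ?thesis unfolding packing_hypergraph_def trivial_edges_def by auto
qed

lemma packing_edge_union:
  assumes P: "r_packing r n P"
    and X: "X \<in> P \<union> (\<lambda>A. vset n - A) ` P" and Y: "Y \<in> P \<union> (\<lambda>A. vset n - A) ` P"
    and XY: "r \<le> card (X \<inter> Y)"
  shows "X \<union> Y \<in> packing_hypergraph r n P"
proof -
  have same: "X = Y" if "X \<in> P" "Y \<in> P"
    using that XY P unfolding r_packing_def by (meson not_le)
  from X Y consider
      "X \<in> P" "Y \<in> P"
    | B where "X \<in> P" "B \<in> P" "Y = vset n - B"
    | A where "A \<in> P" "X = vset n - A" "Y \<in> P"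
    | A B where "A \<in> P" "X = vset n - A" "B \<in> P" "Y = vset n - B"
    by blast
  then show ?thesis
  proof cases
    case 1
    then show ?thesis using same unfolding packing_hypergraph_def by auto
  next
    case 2
    then show ?thesis using packing_union_complement[OF P] by blast
  next
    case 3
    then show ?thesis using packing_union_complement[OF P] by (metis sup_commute)
  next
    case 4
    then show ?thesis using packing_complement_union[OF P] by blast
  qed
qed

lemma vset_Diff_in_packing_hypergraph:
  assumes P: "r_packing r n P" and X: "X \<in> packing_hypergraph r n P"
  shows "vset n - X \<in> packing_hypergraph r n P"
proof -
  have double: "vset n - (vset n - X) = X" using X packing_hypergraph_subset_Pow[OF P] by blast
  from X consider "X \<in> trivial_edges r n" | "X \<in> P" | A where "A \<in> P" "X = vset n - A"
    unfolding packing_hypergraph_def by blast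
  then show ?thesis
  proof cases
    case 1
    then show ?thesis using double unfolding packing_hypergraph_def trivial_edges_def by auto
  next
    case 2
    then show ?thesis unfolding packing_hypergraph_def by blast
  next
    case 3
    then have "vset n - X = A" using P unfolding r_packing_def by auto
    then show ?thesis using 3 unfolding packing_hypergraph_def by simp
  qed
qed

lemma union_in_packing_hypergraph:
  assumes P: "r_packing r n P" and X: "X \<in> packing_hypergraph r n P"
    and Y: "Y \<in> packing_hypergraph r n P" and XY: "r \<le> card (X \<inter> Y)"
  shows "X \<union> Y \<in> packing_hypergraph r n P"
proof -
  have H: "packing_hypergraph r n P \<subseteq> Pow (vset n)" using packing_hypergraph_subset_Pow[OF P] .
  have trivial: "trivial_edges r n \<subseteq> packing_hypergraph r n P"
    unfolding packing_hypergraph_def by blast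
  consider "X \<in> trivial_edges r n" | "Y \<in> trivial_edges r n"
    | "X \<in> P \<union> (\<lambda>A. vset n - A) ` P" "Y \<in> P \<union> (\<lambda>A. vset n - A) ` P"
    using X Y unfolding packing_hypergraph_def by blast
  then show ?thesis
  proof cases
    case 1
    have "Y \<subseteq> vset n" using Y H by blast
    then have "X \<union> Y = Y \<or> X \<union> Y \<in> trivial_edges r n" by (rule trivial_edge_union[OF 1 _ XY])
    then show ?thesis using Y trivial by auto
  next
    case 2
    have "X \<subseteq> vset n" using X H by blast
    moreover have "r \<le> card (Y \<inter> X)" using XY by (simp add: Int_commute)
    ultimately have "Y \<union> X = X \<or> Y \<union> X \<in> trivial_edges r n" by (rule trivial_edge_union[OF 2])
    then show ?thesis using X trivial by (metis Un_commute subsetD)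
  next
    case 3
    then show ?thesis by (rule packing_edge_union[OF P _ _ XY])
  qed
qed

lemma packing_hypergraph_in_K_class:
  assumes P: "r_packing r n P"
  shows "packing_hypergraph r n P \<in> K_class r n"
  unfolding K_class_def
proof (intro CollectI conjI ballI allI impI)
  show "packing_hypergraph r n P \<subseteq> Pow (vset n)" using P by (rule packing_hypergraph_subset_Pow)
  show "X \<in> packing_hypergraph r n P" if "X \<subseteq> vset n \<and> card X \<le> r" for X
    using that unfolding packing_hypergraph_def trivial_edges_def by auto
  show "vset n - X \<in> packing_hypergraph r n P" if "X \<in> packing_hypergraph r n P" for X
    using P that by (rule vset_Diff_in_packing_hypergraph)
  show "X \<union> Y \<in> packing_hypergraph r n P"
    if "X \<in> packing_hypergraph r n P" "Y \<in> packing_hypergraph r n P" "r \<le> card (X \<inter> Y)" for X Y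
    using P that by (rule union_in_packing_hypergraph)
qed

lemma cl_packing_hypergraph:
  assumes P: "r_packing r n P" and G: "G \<subseteq> packing_hypergraph r n P"
    and meets: "\<forall>A\<in>P. A \<in> G \<or> vset n - A \<in> G"
  shows "cl r n G = packing_hypergraph r n P" "cl0 r n G = packing_hypergraph r n P"
proof -
  have PV: "P \<subseteq> Pow (vset n)" using P unfolding r_packing_def by blast
  have least: "packing_hypergraph r n P \<subseteq> E" if "E \<in> K0_class r n" "G \<subseteq> E" for E
    using packing_hypergraph_subset_K0_class[OF that(1) PV] meets that(2) by blast
  note K = packing_hypergraph_in_K_class[OF P]
  show "cl r n G = packing_hypergraph r n P" by (rule cl_eq_cl0_eqI(1)[OF K G least])
  show "cl0 r n G = packing_hypergraph r n P" by (rule cl_eq_cl0_eqI(2)[OF K G least])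
qed

lemma packing_hypergraph_r_closed:
  assumes "r_packing r n P"
  shows "r_closed r n (packing_hypergraph r n P)"
proof -
  have "\<forall>A\<in>P. A \<in> packing_hypergraph r n P \<or> vset n - A \<in> packing_hypergraph r n P"
    unfolding packing_hypergraph_def by blast
  then show ?thesis unfolding r_closed_def by (rule cl_packing_hypergraph(1)[OF assms order.refl])
qed

lemma packing_hypergraph_mono:
  "P \<subseteq> Q \<Longrightarrow> packing_hypergraph r n P \<subseteq> packing_hypergraph r n Q"
  unfolding packing_hypergraph_def by blast

lemma in_packing_hypergraph_restrict:
  "X \<in> packing_hypergraph r n P \<Longrightarrow> X \<in> packing_hypergraph r n {C \<in> P. C = X \<or> vset n - C = X}"
  unfolding packing_hypergraph_def by auto

lemma packing_hypergraph_r_cross_free: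
  assumes P: "r_packing r n P"
  shows "r_cross_free r n (packing_hypergraph r n P)"
  unfolding r_cross_free_def r_orthogonal_def
proof (intro ballI)
  fix A B assume A: "A \<in> packing_hypergraph r n P" and B: "B \<in> packing_hypergraph r n P"
  let ?PA = "{C \<in> P. C = A \<or> vset n - C = A}" and ?PB = "{C \<in> P. C = B \<or> vset n - C = B}"
  have Q: "r_packing r n (?PA \<union> ?PB)" by (rule r_packing_subset[OF P]) blast
  have "A \<in> packing_hypergraph r n (?PA \<union> ?PB)"
    using in_packing_hypergraph_restrict[OF A] packing_hypergraph_mono[of ?PA "?PA \<union> ?PB"] by blast
  moreover have "B \<in> packing_hypergraph r n (?PA \<union> ?PB)"
    using in_packing_hypergraph_restrict[OF B] packing_hypergraph_mono[of ?PB "?PA \<union> ?PB"] by blast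
  moreover have "\<forall>C\<in>?PA \<union> ?PB. C \<in> {A, B} \<or> vset n - C \<in> {A, B}" by blast
  ultimately show "cl r n {A, B} = cl0 r n {A, B}"
    using cl_packing_hypergraph[OF Q, of "{A, B}"] by simp
qed

subsection \<open>Generators of the packing hypergraph\<close>

lemma notin_packing_hypergraph_Diff:
  assumes P: "r_packing r n P" and A: "A \<in> P" and n: "2 * r + 3 \<le> n"
  shows "A \<notin> packing_hypergraph r n (P - {A})"
proof -
  have cardA: "card A = Suc r" using A P unfolding r_packing_def by auto
  have "card (vset n - C) = n - Suc r" if "C \<in> P" for C
    using that P card_vset_Diff unfolding r_packing_def by auto
  then have "A \<noteq> vset n - C" if "C \<in> P" for C
    using that cardA n by fastforce
  moreover have "card (vset n - A) = n - Suc r"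
    using A P card_vset_Diff unfolding r_packing_def by auto
  ultimately show ?thesis
    using cardA n unfolding packing_hypergraph_def trivial_edges_def by auto
qed

lemma generator_meets_complementary_pair:
  assumes P: "r_packing r n P" and n: "2 * r + 3 \<le> n"
    and G: "G \<subseteq> packing_hypergraph r n P" and cl: "cl r n G = packing_hypergraph r n P"
    and A: "A \<in> P"
  shows "A \<in> G \<or> vset n - A \<in> G"
proof (rule ccontr)
  assume "\<not> (A \<in> G \<or> vset n - A \<in> G)"
  then have "G \<subseteq> packing_hypergraph r n (P - {A})"
    using G unfolding packing_hypergraph_def by auto
  then have "cl r n G \<subseteq> packing_hypergraph r n (P - {A})"
    by (rule cl_least[OF packing_hypergraph_in_K_class[OF r_packing_subset[OF P Diff_subset]]])
  then have "A \<in> packing_hypergraph r n (P - {A})"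
    using cl A unfolding packing_hypergraph_def by auto
  then show False using notin_packing_hypergraph_Diff[OF P A n] by blast
qed

lemma card_generator_ge:
  assumes P: "r_packing r n P" and n: "2 * r + 3 \<le> n"
    and G: "G \<subseteq> packing_hypergraph r n P" and cl: "cl r n G = packing_hypergraph r n P"
  shows "card P \<le> 2 * card G"
proof -
  have fin: "finite G"
    using G packing_hypergraph_subset_Pow[OF P] by (meson finite_Pow_iff finite_subset finite_vset)
  have "P \<subseteq> G \<union> (\<lambda>X. vset n - X) ` G"
  proof
    fix A assume "A \<in> P"
    then have "vset n - (vset n - A) = A" using P unfolding r_packing_def by auto
    then show "A \<in> G \<union> (\<lambda>X. vset n - X) ` G"
      using generator_meets_complementary_pair[OF P n G cl \<open>A \<in> P\<close>] by (metis UnI1 UnI2 image_eqI)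
  qed
  then have "card P \<le> card (G \<union> (\<lambda>X. vset n - X) ` G)" using fin by (intro card_mono) auto
  also have "\<dots> \<le> card G + card ((\<lambda>X. vset n - X) ` G)" by (rule card_Un_le)
  also have "\<dots> \<le> 2 * card G" using card_image_le[OF fin] by simp
  finally show ?thesis .
qed

subsection \<open>A packing from a parity-check code\<close>

(* Letter i of the extended word is placed in the i-th of r+1 consecutive blocks of m vertices;
   the shift by 1 is because V = {1..n}. *)

definition codeword :: "nat \<Rightarrow> nat \<Rightarrow> (nat \<Rightarrow> nat) \<Rightarrow> nat \<Rightarrow> nat" where
  "codeword m r v i = (if i < r then v i else (\<Sum>j<r. v j) mod m)"

definition code_block :: "nat \<Rightarrow> nat \<Rightarrow> (nat \<Rightarrow> nat) \<Rightarrow> nat set" where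
  "code_block m r v = (\<lambda>i. i * m + codeword m r v i + 1) ` {..r}"

definition code_packing :: "nat \<Rightarrow> nat \<Rightarrow> nat set set" where
  "code_packing m r = code_block m r ` ({..<r} \<rightarrow>\<^sub>E {..<m})"

lemma codeword_less: "0 < m \<Longrightarrow> v \<in> {..<r} \<rightarrow>\<^sub>E {..<m} \<Longrightarrow> codeword m r v i < m"
  unfolding codeword_def by (auto simp: PiE_iff)

lemma block_position_eq:
  fixes a b :: nat
  assumes "a < m" "b < m" "i * m + a = j * m + b"
  shows "i = j \<and> a = b"
proof -
  have "(i * m + a) div m = i" using assms(1) by simp
  moreover have "(j * m + b) div m = j" using assms(2) by simp
  ultimately show ?thesis using assms(3) by auto
qed

lemma codewords_differ_twice:
  assumes v: "v \<in> {..<r} \<rightarrow>\<^sub>E {..<m}" and u: "u \<in> {..<r} \<rightarrow>\<^sub>E {..<m}" and "v \<noteq> u"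
  shows "\<exists>i\<le>r. \<exists>j\<le>r. i \<noteq> j \<and> codeword m r v i \<noteq> codeword m r u i \<and>
    codeword m r v j \<noteq> codeword m r u j"
proof -
  obtain j where j: "j < r" "v j \<noteq> u j"
    using assms by (metis PiE_E lessThan_iff ext)
  have "\<exists>i\<le>r. i \<noteq> j \<and> codeword m r v i \<noteq> codeword m r u i"
  proof (rule ccontr)
    assume "\<not> ?thesis"
    then have agree: "codeword m r v i = codeword m r u i" if "i \<le> r" "i \<noteq> j" for i
      using that by blast
    have "v i = u i" if "i < r" "i \<noteq> j" for i
      using agree[of i] that by (simp add: codeword_def)
    then have "(\<Sum>i\<in>{..<r} - {j}. v i) = (\<Sum>i\<in>{..<r} - {j}. u i)"
      by (intro sum.cong) auto
    moreover have "[\<Sum>i<r. v i = \<Sum>i<r. u i] (mod m)"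
      using agree[of r] j by (simp add: codeword_def cong_def)
    moreover have "(\<Sum>i<r. v i) = v j + (\<Sum>i\<in>{..<r} - {j}. v i)"
      "(\<Sum>i<r. u i) = u j + (\<Sum>i\<in>{..<r} - {j}. u i)"
      using j by (simp_all add: sum.remove)
    ultimately have "[v j = u j] (mod m)"
      by (simp add: cong_add_rcancel_nat)
    moreover have "v j < m" "u j < m" using v u j by (auto simp: PiE_iff)
    ultimately show False using j cong_less_modulus_unique_nat by blast
  qed
  then show ?thesis
    using j unfolding codeword_def by (metis less_imp_le)
qed

lemma code_block_subset:
  assumes "0 < m" "v \<in> {..<r} \<rightarrow>\<^sub>E {..<m}"
  shows "code_block m r v \<subseteq> vset (Suc r * m)"
proof
  fix x assume "x \<in> code_block m r v"
  then obtain i where i: "i \<le> r" "x = i * m + codeword m r v i + 1"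
    unfolding code_block_def by auto
  have "i * m \<le> r * m" using i(1) by simp
  then have "x \<le> r * m + m" using i(2) codeword_less[OF assms, of i] by linarith
  then show "x \<in> vset (Suc r * m)" using i(2) unfolding vset_def by simp
qed

lemma card_code_block:
  assumes "0 < m" "v \<in> {..<r} \<rightarrow>\<^sub>E {..<m}"
  shows "card (code_block m r v) = Suc r"
proof -
  have "inj_on (\<lambda>i. i * m + codeword m r v i + 1) {..r}"
    using block_position_eq codeword_less[OF assms] unfolding inj_on_def by (metis add_right_cancel)
  then show ?thesis unfolding code_block_def by (simp add: card_image)
qed

lemma card_code_block_Int:
  assumes m: "0 < m" and v: "v \<in> {..<r} \<rightarrow>\<^sub>E {..<m}" and u: "u \<in> {..<r} \<rightarrow>\<^sub>E {..<m}"
    and "v \<noteq> u"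
  shows "card (code_block m r v \<inter> code_block m r u) < r"
proof -
  obtain i j where ij: "i \<le> r" "j \<le> r" "i \<noteq> j"
    "codeword m r v i \<noteq> codeword m r u i" "codeword m r v j \<noteq> codeword m r u j"
    using codewords_differ_twice[OF v u \<open>v \<noteq> u\<close>] by blast
  let ?pos = "\<lambda>k. k * m + codeword m r v k + 1"
  have "code_block m r v \<inter> code_block m r u \<subseteq> ?pos ` ({..r} - {i, j})"
  proof
    fix x assume "x \<in> code_block m r v \<inter> code_block m r u"
    then obtain k l where kl: "k \<le> r" "l \<le> r" "x = ?pos k"
      "x = l * m + codeword m r u l + 1"
      unfolding code_block_def by auto
    then have "k = l \<and> codeword m r v k = codeword m r u l"
      using block_position_eq codeword_less[OF m v] codeword_less[OF m u] by (metis add_right_cancel)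
    then show "x \<in> ?pos ` ({..r} - {i, j})" using kl ij by auto
  qed
  then have "card (code_block m r v \<inter> code_block m r u) \<le> card (?pos ` ({..r} - {i, j}))"
    by (intro card_mono) auto
  also have "\<dots> \<le> card ({..r} - {i, j})" by (rule card_image_le) simp
  also have "\<dots> < r" using ij by (simp add: card_Diff_subset)
  finally show ?thesis .
qed

lemma r_packing_code_packing:
  assumes m: "0 < m"
  shows "r_packing r (Suc r * m) (code_packing m r)"
  unfolding r_packing_def code_packing_def
proof (intro conjI ballI impI subsetI)
  fix X assume "X \<in> code_block m r ` ({..<r} \<rightarrow>\<^sub>E {..<m})"
  then obtain v where v: "v \<in> {..<r} \<rightarrow>\<^sub>E {..<m}" and X: "X = code_block m r v" by blast
  show "X \<in> Pow (vset (Suc r * m))" using code_block_subset[OF m v] X by simp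
  show "card X = Suc r" using card_code_block[OF m v] X by simp
  fix Y assume "Y \<in> code_block m r ` ({..<r} \<rightarrow>\<^sub>E {..<m})" and "X \<noteq> Y"
  then obtain u where u: "u \<in> {..<r} \<rightarrow>\<^sub>E {..<m}" and Y: "Y = code_block m r u" "v \<noteq> u"
    using X by blast
  show "card (X \<inter> Y) < r" using card_code_block_Int[OF m v u \<open>v \<noteq> u\<close>] X Y by simp
qed

lemma card_code_packing:
  assumes m: "0 < m"
  shows "card (code_packing m r) = m ^ r"
proof -
  have "inj_on (code_block m r) ({..<r} \<rightarrow>\<^sub>E {..<m})"
  proof (rule inj_onI, rule ccontr)
    fix v u assume v: "v \<in> {..<r} \<rightarrow>\<^sub>E {..<m}" and u: "u \<in> {..<r} \<rightarrow>\<^sub>E {..<m}"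
      and same: "code_block m r v = code_block m r u" and "v \<noteq> u"
    have "card (code_block m r v \<inter> code_block m r u) < r"
      using card_code_block_Int[OF m v u \<open>v \<noteq> u\<close>] .
    then show False using same card_code_block[OF m v] by simp
  qed
  then show ?thesis unfolding code_packing_def by (simp add: card_image card_PiE)
qed

lemma hypergraph_with_large_generators:
  assumes m: "3 \<le> m"
  shows "\<exists>H. H \<subseteq> Pow (vset (Suc r * m)) \<and> r_cross_free r (Suc r * m) H \<and>
    r_closed r (Suc r * m) H \<and>
    (\<forall>G. G \<subseteq> H \<and> cl r (Suc r * m) G = H \<longrightarrow> real m ^ r \<le> 2 * real (card G))"
proof (intro exI[of _ "packing_hypergraph r (Suc r * m) (code_packing m r)"] conjI allI impI)
  have "0 < m" using m by simp
  note P = r_packing_code_packing[OF this, of r]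
  have n: "2 * r + 3 \<le> Suc r * m" using mult_le_mono2[OF m, of "Suc r"] by simp
  show "packing_hypergraph r (Suc r * m) (code_packing m r) \<subseteq> Pow (vset (Suc r * m))"
    using P by (rule packing_hypergraph_subset_Pow)
  show "r_cross_free r (Suc r * m) (packing_hypergraph r (Suc r * m) (code_packing m r))"
    using P by (rule packing_hypergraph_r_cross_free)
  show "r_closed r (Suc r * m) (packing_hypergraph r (Suc r * m) (code_packing m r))"
    using P by (rule packing_hypergraph_r_closed)
  fix G assume "G \<subseteq> packing_hypergraph r (Suc r * m) (code_packing m r) \<and>
    cl r (Suc r * m) G = packing_hypergraph r (Suc r * m) (code_packing m r)"
  then have "m ^ r \<le> 2 * card G"
    using card_generator_ge[OF P n] card_code_packing[OF \<open>0 < m\<close>] by simp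
  then have "real (m ^ r) \<le> real (2 * card G)" by (simp only: of_nat_le_iff)
  then show "real m ^ r \<le> 2 * real (card G)" by simp
qed

lemma infinite_if_contains_multiples:
  fixes N :: "nat set"
  assumes "\<And>m. m\<^sub>0 \<le> m \<Longrightarrow> Suc r * m \<in> N"
  shows "infinite N"
  unfolding infinite_nat_iff_unbounded_le
proof
  fix k
  have "k \<le> Suc r * (k + m\<^sub>0)" by simp
  moreover have "Suc r * (k + m\<^sub>0) \<in> N" by (rule assms) simp
  ultimately show "\<exists>n\<ge>k. n \<in> N" by blast
qed

theorem theorem3:
  fixes r :: nat
  assumes "r > 0"
  shows "\<exists>c::real. c > 0 \<and>
    infinite {n::nat. \<exists>H. H \<subseteq> Pow (vset n) \<and> r_cross_free r n H \<and> r_closed r n H \<and>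
       (\<forall>H'. H' \<subseteq> H \<and> cl r n H' = H \<longrightarrow> real (card H') \<ge> c * real n ^ r)}"
proof (intro exI conjI)
  \<comment> \<open>The construction works for r = 0 as well.\<close>
  define c :: real where "c = 1 / (2 * real (Suc r) ^ r)"
  show "c > 0" unfolding c_def by simp
  show "infinite {n::nat. \<exists>H. H \<subseteq> Pow (vset n) \<and> r_cross_free r n H \<and> r_closed r n H \<and>
       (\<forall>H'. H' \<subseteq> H \<and> cl r n H' = H \<longrightarrow> real (card H') \<ge> c * real n ^ r)}"
  proof (rule infinite_if_contains_multiples)
    fix m :: nat assume "3 \<le> m"
    from hypergraph_with_large_generators[OF this, of r] obtain H where H: "H \<subseteq> Pow (vset (Suc r * m))" "r_cross_free r (Suc r * m) H"
        "r_closed r (Suc r * m) H"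
      and gen: "\<forall>G. G \<subseteq> H \<and> cl r (Suc r * m) G = H \<longrightarrow> real m ^ r \<le> 2 * real (card G)"
      by blast
    have "real (Suc r * m) ^ r = real (Suc r) ^ r * real m ^ r"
      by (simp only: of_nat_mult power_mult_distrib)
    then have "c * real (Suc r * m) ^ r = real m ^ r / 2" by (simp add: c_def)
    then show "Suc r * m \<in> {n. \<exists>H. H \<subseteq> Pow (vset n) \<and> r_cross_free r n H \<and> r_closed r n H \<and>
       (\<forall>H'. H' \<subseteq> H \<and> cl r n H' = H \<longrightarrow> real (card H') \<ge> c * real n ^ r)}"
      using gen by (intro CollectI exI[of _ H] conjI H allI impI) auto
  qed
qed

end
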